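(* Let $C\subset\mathbb{R}^n$ be a compact convex set containing $0$. Let $g\in C$ with $g\ne0$ and let $H$ be a symmetric positive definite $n\times n$ matrix. Set $s=-Hg$, let $g_+$ be any maximizer of $z\mapsto z^Ts$ over $C$, and set $y=g_+-g$, $V=I-\frac{sy^T}{s^Ty}$, $H_+=VHV^T+\frac{ss^T}{s^Ty}$. Then $$\det H_+\le \frac{\det H}{1+\operatorname{sym}(C)}.$$
   Context: The symmetry measure of $C$ is $\operatorname{sym}(C)=\max\{t: g\in C\Rightarrow -tg\in C\}$. (Under the hypotheses, $s^Ty\ge g^THg>0$, so $H_+$ is well defined.) *)

theory Defs
  imports "HOL-Analysis.Analysis"
begin

text \<open>Under the standing hypotheses (C compact, containing a nonzero point) this set
  is nonempty, closed and bounded above, so the supremum is the maximum.\<close>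
definition sym_measure :: "(real ^ 'n) set \<Rightarrow> real" where
  "sym_measure C = Sup {t. \<forall>g\<in>C. - t *\<^sub>R g \<in> C}"

definition outer :: "real ^ 'n \<Rightarrow> real ^ 'n \<Rightarrow> real ^ 'n ^ 'n" where
  "outer u v = (\<chi> i j. u $ i * v $ j)"

definition pos_def_matrix :: "real ^ 'n ^ 'n \<Rightarrow> bool" where
  "pos_def_matrix H \<longleftrightarrow> transpose H = H \<and> (\<forall>x. x \<noteq> 0 \<longrightarrow> x \<bullet> (H *v x) > 0)"

end

theory Submission imports Defs begin

text \<open>With \<open>s = -H g\<close> and \<open>y = g\<^sub>+ - g\<close>, the update \<open>H\<^sub>+\<close> is a congruence
  \<open>T H T\<^sup>T\<close> by a rank-one perturbation \<open>T = I + s w\<^sup>T\<close> of the identity, whence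
  \<open>det H\<^sub>+ = det H \<cdot> (g\<^sup>T H g) / (s\<^sup>T y)\<close>. Since \<open>-t g \<in> C\<close> for every admissible
  \<open>t\<close>, maximality of \<open>g\<^sub>+\<close> gives \<open>g\<^sub>+\<^sup>T s \<ge> t g\<^sup>T H g\<close>, i.e.
  \<open>s\<^sup>T y \<ge> (1 + t) g\<^sup>T H g\<close>; taking the supremum over \<open>t\<close> yields the bound.\<close>

lemma matrix_add_rdistrib: "((A::real^'n^'m) + B) ** C = A ** C + B ** C"
  by (simp add: vec_eq_iff matrix_matrix_mult_def sum.distrib distrib_right)

lemma matrix_diff_rdistrib: "((A::real^'n^'m) - B) ** C = A ** C - B ** C"
  by (simp add: vec_eq_iff matrix_matrix_mult_def sum_subtractf left_diff_distrib)

lemma matrix_diff_ldistrib: "(A::real^'n^'m) ** (B - C) = A ** B - A ** C"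
  by (simp add: vec_eq_iff matrix_matrix_mult_def sum_subtractf right_diff_distrib)

lemma matrix_mul_scaleR_left: "(c *\<^sub>R (A::real^'n^'m)) ** B = c *\<^sub>R (A ** B)"
  by (simp add: vec_eq_iff matrix_matrix_mult_def sum_distrib_left mult.assoc)

lemma matrix_mul_scaleR_right: "(A::real^'n^'m) ** (c *\<^sub>R B) = c *\<^sub>R (A ** B)"
  by (simp add: vec_eq_iff matrix_matrix_mult_def sum_distrib_left mult_ac)

lemma outer_matrix_mul: "outer u v ** A = outer u (transpose A *v v)"
  by (simp add: outer_def matrix_matrix_mult_def matrix_vector_mult_def transpose_def vec_eq_iff
      sum_distrib_left mult.commute mult.left_commute)

lemma matrix_mul_outer: "A ** outer u v = outer (A *v u) v"
  by (simp add: outer_def matrix_matrix_mult_def matrix_vector_mult_def vec_eq_iff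
      sum_distrib_left mult_ac)

lemma outer_mult_vector: "outer u v *v x = (v \<bullet> x) *\<^sub>R u"
  by (simp add: outer_def matrix_vector_mult_def vec_eq_iff inner_vec_def sum_distrib_left
      mult.commute mult.left_commute)

lemma outer_zero_left: "outer 0 v = 0"
  by (simp add: outer_def vec_eq_iff)

lemma transpose_add: "transpose ((A::'a::semiring_1^'n^'m) + B) = transpose A + transpose B"
  by (simp add: transpose_def vec_eq_iff)

lemma transpose_diff: "transpose ((A::'a::ring_1^'n^'m) - B) = transpose A - transpose B"
  by (simp add: transpose_def vec_eq_iff)

lemma transpose_outer: "transpose (outer u v) = outer v u"
  by (simp add: outer_def transpose_def vec_eq_iff)

lemma inner_symmetric_matrix:
  fixes H :: "real^'n^'n"
  assumes "transpose H = H"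
  shows "(H *v x) \<bullet> z = x \<bullet> (H *v z)"
  by (metis assms dot_lmul_matrix transpose_matrix_vector)

text \<open>If \<open>u\<^sub>k \<noteq> 0\<close>, the matrix \<open>P\<close> obtained from \<open>I\<close> by replacing column \<open>k\<close> with \<open>u\<close>
  conjugates \<open>I + u w\<^sup>T\<close> to \<open>I + e\<^sub>k v\<^sup>T\<close>, which differs from \<open>I\<close> in a single row.\<close>
lemma det_mat1_plus_outer: "det (mat 1 + outer u w :: real^'n^'n) = 1 + w \<bullet> u"
proof (cases "u = 0")
  case True
  then show ?thesis by (simp add: outer_zero_left)
next
  case False
  then obtain k where uk: "u $ k \<noteq> 0" by (auto simp: vec_eq_iff)
  define P :: "real^'n^'n" where "P = (\<chi> i j. if j = k then u $ i else mat 1 $ i $ j)"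
  define v where "v = transpose P *v w"
  have det_P: "det P = u $ k"
    using cramer_lemma[where A="mat 1 :: real^'n^'n" and k=k and x=u, unfolded matrix_vector_mul_lid]
    by (simp add: P_def)
  have P_axis: "P *v axis k 1 = u"
  proof -
    have "\<And>j a b. (if j = k then a else b) * (if j = k then 1 else 0) = (if j = k then a else (0::real))"
      by simp
    then show ?thesis by (simp add: vec_eq_iff matrix_vector_mult_def axis_def P_def)
  qed
  have conj: "(mat 1 + outer u w) ** P = P ** (mat 1 + outer (axis k 1) v)"
    by (simp add: matrix_add_rdistrib matrix_add_ldistrib outer_matrix_mul matrix_mul_outer P_axis v_def)
  have "transpose (mat 1 + outer (axis k 1) v)
      = (\<chi> i j. if j = k then (axis k 1 + v) $ i else mat 1 $ i $ j)"
    by (simp add: vec_eq_iff transpose_def outer_def mat_def axis_def)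
  then have det_row: "det (mat 1 + outer (axis k 1) v) = 1 + v $ k"
    using cramer_lemma[where A="mat 1 :: real^'n^'n" and k=k and x="axis k 1 + v",
        unfolded matrix_vector_mul_lid]
      det_transpose[of "mat 1 + outer (axis k 1) v"]
    by simp
  have "v $ k = w \<bullet> u"
    by (simp add: v_def matrix_vector_mult_def transpose_def P_def inner_vec_def mult.commute)
  then have "det (mat 1 + outer u w) * u $ k = u $ k * (1 + w \<bullet> u)"
    using arg_cong[OF conj, of det] by (simp add: det_mul det_P det_row)
  then show ?thesis using uk by simp
qed

text \<open>Along the segment from \<open>I\<close> to \<open>H\<close> all matrices are positive definite, hence
  nonsingular, so the determinant cannot change sign.\<close>
lemma pos_def_matrix_det_pos:
  fixes H :: "real^'n^'n"
  assumes "pos_def_matrix H"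
  shows "det H > 0"
proof -
  define f where "f t = det ((1 - t) *\<^sub>R mat 1 + t *\<^sub>R H)" for t :: real
  have cont: "continuous_on {0..1} f"
    unfolding f_def det_def by (intro continuous_intros)
  have nonzero: "f t \<noteq> 0" if "0 \<le> t" "t \<le> 1" for t
  proof
    assume "f t = 0"
    then obtain x where x: "x \<noteq> 0" "((1 - t) *\<^sub>R mat 1 + t *\<^sub>R H) *v x = 0"
      unfolding f_def using det_eq_0_rank less_rank_noninjective vec.inj_iff_eq_0 by blast
    then have "0 = x \<bullet> ((1 - t) *\<^sub>R x + t *\<^sub>R (H *v x))"
      by (simp add: matrix_vector_mult_add_rdistrib scaleR_matrix_vector_assoc[symmetric])
    also have "\<dots> = (1 - t) * (x \<bullet> x) + t * (x \<bullet> (H *v x))"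
      by (simp add: inner_add_right)
    also have "\<dots> > 0"
    proof -
      have "x \<bullet> x > 0" "x \<bullet> (H *v x) > 0"
        using assms x unfolding pos_def_matrix_def by auto
      with that show ?thesis
        by (cases "t = 0") (auto intro: add_nonneg_pos)
    qed
    finally show False by simp
  qed
  show ?thesis
  proof (rule ccontr)
    assume "\<not> det H > 0"
    then have "f 1 \<le> 0" "f 0 = 1" by (simp_all add: f_def)
    then obtain t where "0 \<le> t" "t \<le> 1" "f t = 0"
      using IVT2'[of f 1 0 0, OF _ _ _ cont] by auto
    then show False using nonzero by blast
  qed
qed

text \<open>The choice of \<open>a\<close> with \<open>a\<^sup>2 u\<^sup>T s = \<rho>\<close> balances the coefficient of \<open>s s\<^sup>T\<close>.\<close>
lemma inverse_bfgs_update_congruence: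
  fixes H :: "real^'n^'n"
  assumes H_sym: "transpose H = H" and Hu: "H *v u = s"
    and a: "a * a * (u \<bullet> s) = \<rho>" and \<rho>: "\<rho> * (s \<bullet> y) = 1"
  defines "T \<equiv> mat 1 + outer s (a *\<^sub>R u - \<rho> *\<^sub>R y)"
  shows "(mat 1 - \<rho> *\<^sub>R outer s y) ** H ** transpose (mat 1 - \<rho> *\<^sub>R outer s y)
           + \<rho> *\<^sub>R outer s s = T ** H ** transpose T"
proof -
  define w where "w = a *\<^sub>R u - \<rho> *\<^sub>R y"
  define h where "h = H *v y"
  define e where "e = h \<bullet> y"
  define V where "V = mat 1 - \<rho> *\<^sub>R outer s y"
  have hu: "h \<bullet> u = s \<bullet> y"
    using inner_symmetric_matrix[OF H_sym, of y u] by (simp add: h_def Hu inner_commute)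
  have Hw: "H *v w = a *\<^sub>R s - \<rho> *\<^sub>R h"
    by (simp add: w_def h_def Hu matrix_vector_mult_diff_distrib matrix_vector_mult_scaleR)
  have "(H *v w) \<bullet> w = a * a * (u \<bullet> s) - 2 * a * (\<rho> * (s \<bullet> y)) + \<rho> * \<rho> * e"
    unfolding Hw unfolding w_def e_def
    by (simp add: inner_diff_left inner_diff_right hu inner_commute[of s] algebra_simps)
  then have wHw: "(H *v w) \<bullet> w = \<rho> - 2 * a + \<rho> * \<rho> * e"
    by (simp add: a \<rho>)
  have trV: "transpose V = mat 1 - \<rho> *\<^sub>R outer y s"
    by (simp add: V_def transpose_diff transpose_scalar transpose_outer)
  have VH: "V ** H = H - \<rho> *\<^sub>R outer s h"
    by (simp add: V_def matrix_diff_rdistrib matrix_mul_scaleR_left outer_matrix_mul H_sym h_def)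
  have L: "V ** H ** transpose V + \<rho> *\<^sub>R outer s s
      = H - \<rho> *\<^sub>R outer s h - \<rho> *\<^sub>R outer (h - (\<rho> * e) *\<^sub>R s) s + \<rho> *\<^sub>R outer s s"
    using trV by (simp add: matrix_diff_ldistrib matrix_mul_scaleR_right matrix_mul_outer VH
        matrix_vector_mult_diff_rdistrib outer_mult_vector h_def e_def inner_commute
        scaleR_matrix_vector_assoc[symmetric])
  have TH: "T ** H = H + outer s (H *v w)"
    by (simp add: T_def w_def matrix_add_rdistrib outer_matrix_mul H_sym)
  then have R: "T ** H ** transpose T
      = H + outer s (H *v w) + outer (H *v w + ((H *v w) \<bullet> w) *\<^sub>R s) s"
    by (simp add: T_def[folded w_def] transpose_add transpose_outer matrix_add_ldistrib
        matrix_mul_outer matrix_vector_mult_add_rdistrib outer_mult_vector)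
  show ?thesis
    unfolding V_def[symmetric] L R unfolding wHw unfolding Hw
    by (simp add: vec_eq_iff outer_def algebra_simps)
qed

lemma det_inverse_bfgs_update:
  fixes H :: "real^'n^'n"
  assumes "transpose H = H" and "H *v u = s" and q: "0 < u \<bullet> s" and d: "0 < s \<bullet> y"
  shows "det ((mat 1 - (1 / (s \<bullet> y)) *\<^sub>R outer s y) ** H
              ** transpose (mat 1 - (1 / (s \<bullet> y)) *\<^sub>R outer s y)
              + (1 / (s \<bullet> y)) *\<^sub>R outer s s)
         = det H * (u \<bullet> s) / (s \<bullet> y)"
proof -
  define \<rho> where "\<rho> = 1 / (s \<bullet> y)"
  define a where "a = sqrt (\<rho> / (u \<bullet> s))"
  have a: "a * a * (u \<bullet> s) = \<rho>" and \<rho>: "\<rho> * (s \<bullet> y) = 1"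
    using q d by (simp_all add: a_def \<rho>_def)
  have "1 + (a *\<^sub>R u - \<rho> *\<^sub>R y) \<bullet> s = a * (u \<bullet> s)"
    using \<rho> by (simp add: inner_diff_left inner_commute[of y s])
  then have "det ((mat 1 - \<rho> *\<^sub>R outer s y) ** H ** transpose (mat 1 - \<rho> *\<^sub>R outer s y)
              + \<rho> *\<^sub>R outer s s) = det H * (a * a * (u \<bullet> s) * (u \<bullet> s))"
    unfolding inverse_bfgs_update_congruence[OF assms(1,2) a \<rho>]
    by (simp add: det_mul det_transpose det_mat1_plus_outer algebra_simps)
  then show ?thesis
    by (simp add: a \<rho>_def)
qed

lemma sym_measure_bounds:
  fixes C :: "(real^'n) set"
  assumes "0 \<in> C" and "\<And>t. \<forall>g\<in>C. - t *\<^sub>R g \<in> C \<Longrightarrow> t \<le> b"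
  shows "0 \<le> sym_measure C" and "sym_measure C \<le> b"
proof -
  let ?S = "{t. \<forall>g\<in>C. - t *\<^sub>R g \<in> C}"
  have "0 \<in> ?S" "bdd_above ?S"
    using assms unfolding bdd_above_def by auto
  then show "0 \<le> sym_measure C"
    unfolding sym_measure_def by (rule cSup_upper)
  show "sym_measure C \<le> b"
    unfolding sym_measure_def by (intro cSup_least) (use \<open>0 \<in> ?S\<close> assms(2) in blast)+
qed

theorem mainTheorem6:
  fixes C :: "(real ^ 'n) set" and g gp :: "real ^ 'n" and H :: "real ^ 'n ^ 'n"
  assumes "compact C" and "convex C" and "0 \<in> C"
    and "g \<in> C" and "g \<noteq> 0"
    and "pos_def_matrix H"
    and "gp \<in> C" and "\<forall>z\<in>C. z \<bullet> (- (H *v g)) \<le> gp \<bullet> (- (H *v g))"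
  shows "let s = - (H *v g); y = gp - g;
             V = mat 1 - (1 / (s \<bullet> y)) *\<^sub>R outer s y;
             Hp = V ** H ** transpose V + (1 / (s \<bullet> y)) *\<^sub>R outer s s
         in det Hp \<le> det H / (1 + sym_measure C)"
proof -
  define s where "s = - (H *v g)"
  define y where "y = gp - g"
  define q where "q = - g \<bullet> s"
  have q: "q > 0"
    using assms(5,6) unfolding pos_def_matrix_def q_def s_def by simp
  have curvature: "(1 + t) * q \<le> s \<bullet> y" if "\<forall>z\<in>C. - t *\<^sub>R z \<in> C" for t
    using that assms(4,8) by (force simp: y_def q_def s_def inner_diff_right inner_commute algebra_simps)
  have d: "0 < s \<bullet> y"
    using curvature[of 0] q assms(3) by simp
  have "0 \<le> sym_measure C" "sym_measure C \<le> (s \<bullet> y) / q - 1"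
    using sym_measure_bounds[OF assms(3), of "(s \<bullet> y) / q - 1"] curvature q
    by (auto simp: field_simps)
  then have "q / (s \<bullet> y) \<le> 1 / (1 + sym_measure C)"
    using q d by (simp add: field_simps)
  then have "det H * q / (s \<bullet> y) \<le> det H / (1 + sym_measure C)"
    using mult_left_mono pos_def_matrix_det_pos[OF assms(6)] by fastforce
  moreover have "transpose H = H"
    using assms(6) unfolding pos_def_matrix_def by blast
  moreover have "H *v (- g) = s"
    by (simp add: s_def matrix_vector_mult_def vec_eq_iff sum_negf)
  ultimately show ?thesis
    unfolding Let_def s_def[symmetric] y_def[symmetric]
    using det_inverse_bfgs_update[of H "- g" s y] q d by (simp add: q_def)
qed

end
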